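(* Consider the linear content-access game described in the context, with parameters $\tau>0$, beliefs $\pi_G\in[0,1]$, $\pi_B=1-\pi_G$, push rates $\lambda_{ps}(G)\geq \lambda_{ps}(B)>0$ and pull rate $\lambda_{pu}>0$, and let the common threshold $\alpha$ of all other users satisfy $0\le \alpha\le \beta_{\tau,B}$. Then: (i) if $\frac{\pi_G}{\lambda_{ps}(G)} \geq \frac{\pi_B}{\lambda_{ps}(B)}$, then $\beta^*(\alpha)=0$ is a best response to $\alpha$; (ii) if $\frac{\pi_G}{\lambda_{ps}(G)} \leq \frac{\pi_B}{\lambda_{ps}(B)}$ and $\frac{\pi_G}{\lambda_{ps}(G)+\lambda_{pu}} \geq \frac{\pi_B}{\lambda_{ps}(B)+\lambda_{pu}}$, then $\beta^*(\alpha)=\alpha$ is a best response to $\alpha$; (iii) if $\frac{\pi_G}{\lambda_{ps}(G)} \leq \frac{\pi_B}{\lambda_{ps}(B)}$ and $\frac{\pi_G}{\lambda_{ps}(G)+\lambda_{pu}} < \frac{\pi_B}{\lambda_{ps}(B)+\lambda_{pu}}$, then $\beta^*(\alpha)=\beta_{\tau,B}$ is a best response to $\alpha$.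
   Context: A content has a type $\theta\in\{G,B\}$ (good/bad) and lifetime $\tau>0$. Users hold beliefs $\pi_G\in[0,1]$ that the content is good and $\pi_B=1-\pi_G$ that it is bad. Each (pull) user uses a threshold strategy: access the content once its viewcount reaches a threshold. All users other than a tagged user use a common threshold $\alpha\ge 0$; the tagged user uses $\beta\ge0$ (a single user's deviation does not affect the viewcount). Linear dynamics: for a content of type $\theta$, with push rate $\lambda_{ps}(\theta)>0$ (assumed $\lambda_{ps}(G)\ge\lambda_{ps}(B)$) and a type-independent pull rate $\lambda_{pu}>0$, let $t_\alpha(\theta)=\alpha/\lambda_{ps}(\theta)$ and define the viewcount $X(t,\theta)=\lambda_{ps}(\theta)\,t+\lambda_{pu}\,(t-t_\alpha(\theta))^+$ for $t\ge0$. For $\beta\ge0$ let $t_\beta(\theta)=\min\{t\ge 0: X(t,\theta)=\beta\}$. Let $\beta_{\tau,B}=X(\tau,B)$, i.e. the value with $t_{\beta_{\tau,B}}(B)=\tau$. The tagged user's utility is $U(\alpha,\beta)=\pi_G(\tau-t_\beta(G))-\pi_B(\tau-t_\beta(B))$ for $0\le\beta\le\beta_{\tau,B}$, and a best response $\beta^*(\alpha)$ is a maximizer of $U(\alpha,\cdot)$ over $[0,\beta_{\tau,B}]$. *)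

theory Defs
  imports Complex_Main
begin

text \<open>Linear dynamics for a content with push rate lps (= lambda_ps(theta)) and
  pull rate lpu, other users using threshold alpha.\<close>

definition t_alpha :: "real \<Rightarrow> real \<Rightarrow> real" where
  "t_alpha lps alpha = alpha / lps"

definition viewcount :: "real \<Rightarrow> real \<Rightarrow> real \<Rightarrow> real \<Rightarrow> real" where
  "viewcount lps lpu alpha t = lps * t + lpu * max 0 (t - t_alpha lps alpha)"

definition t_beta :: "real \<Rightarrow> real \<Rightarrow> real \<Rightarrow> real \<Rightarrow> real" where
  "t_beta lps lpu alpha beta = (LEAST t. 0 \<le> t \<and> viewcount lps lpu alpha t = beta)"

definition beta_tauB :: "real \<Rightarrow> real \<Rightarrow> real \<Rightarrow> real \<Rightarrow> real" where
  "beta_tauB lpsB lpu alpha tau = viewcount lpsB lpu alpha tau"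

definition utility :: "real \<Rightarrow> real \<Rightarrow> real \<Rightarrow> real \<Rightarrow> real \<Rightarrow> real \<Rightarrow> real \<Rightarrow> real" where
  "utility piG lpsG lpsB lpu tau alpha beta =
     piG * (tau - t_beta lpsG lpu alpha beta) - (1 - piG) * (tau - t_beta lpsB lpu alpha beta)"

definition best_response :: "real \<Rightarrow> real \<Rightarrow> real \<Rightarrow> real \<Rightarrow> real \<Rightarrow> real \<Rightarrow> real \<Rightarrow> bool" where
  "best_response piG lpsG lpsB lpu tau alpha beta \<longleftrightarrow>
     beta \<in> {0 .. beta_tauB lpsB lpu alpha tau} \<and>
     (\<forall>b \<in> {0 .. beta_tauB lpsB lpu alpha tau}.
        utility piG lpsG lpsB lpu tau alpha b \<le> utility piG lpsG lpsB lpu tau alpha beta)"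

end

theory Submission
  imports Defs
begin

text \<open>Before the other users switch on (viewcount \<open>alpha\<close>) the viewcount grows at the push
  rate, afterwards at push plus pull rate, so the time to reach \<open>beta\<close> is piecewise linear in
  \<open>beta\<close> with a kink at \<open>alpha\<close>. Hence so is the utility; its slopes on \<open>[0, alpha]\<close> and
  \<open>[alpha, beta_tauB]\<close> are \<open>pi_B/lambda_ps(B) - pi_G/lambda_ps(G)\<close> and the same expression
  with \<open>lambda_pu\<close> added to both rates. A piecewise linear function is maximised at an
  endpoint or at the kink, according to the signs of the slopes; the sign pattern
  (negative, positive) cannot occur because \<open>lambda_ps(G) \<ge> lambda_ps(B)\<close>.\<close>

lemma strict_mono_viewcount:
  assumes "lps > 0" "lpu \<ge> 0"
  shows "strict_mono (viewcount lps lpu alpha)"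
proof (rule strict_monoI)
  fix s t :: real assume "s < t"
  then have "lpu * max 0 (s - t_alpha lps alpha) \<le> lpu * max 0 (t - t_alpha lps alpha)"
    using assms by (intro mult_left_mono) auto
  moreover have "lps * s < lps * t" using \<open>s < t\<close> assms by simp
  ultimately show "viewcount lps lpu alpha s < viewcount lps lpu alpha t"
    by (simp add: viewcount_def)
qed

lemma viewcount_hitting_time:
  assumes "lps > 0" "lpu \<ge> 0" "alpha \<ge> 0"
  shows "viewcount lps lpu alpha (min beta alpha / lps + max 0 (beta - alpha) / (lps + lpu)) = beta"
proof (cases "beta \<le> alpha")
  case True
  with assms show ?thesis
    by (simp add: viewcount_def t_alpha_def divide_right_mono)
next
  case False
  let ?d = "(beta - alpha) / (lps + lpu)"
  have "lps + lpu > 0" using assms by simp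
  then have "lps * (alpha / lps + ?d) + lpu * ?d = alpha + (lps + lpu) * ?d"
    using assms by (simp add: distrib_left distrib_right add_divide_distrib)
  also have "\<dots> = beta" using \<open>lps + lpu > 0\<close> by simp
  finally show ?thesis using False assms by (simp add: viewcount_def t_alpha_def)
qed

lemma t_beta_eq:
  assumes "lps > 0" "lpu \<ge> 0" "alpha \<ge> 0" "beta \<ge> 0"
  shows "t_beta lps lpu alpha beta = min beta alpha / lps + max 0 (beta - alpha) / (lps + lpu)"
  unfolding t_beta_def
proof (rule Least_equality)
  let ?T = "min beta alpha / lps + max 0 (beta - alpha) / (lps + lpu)"
  show "0 \<le> ?T \<and> viewcount lps lpu alpha ?T = beta"
    using assms viewcount_hitting_time[OF assms(1-3)] by simp
  show "?T \<le> t" if "0 \<le> t \<and> viewcount lps lpu alpha t = beta" for t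
  proof -
    have "viewcount lps lpu alpha t = viewcount lps lpu alpha ?T"
      using that viewcount_hitting_time[OF assms(1-3)] by simp
    then show ?thesis using strict_mono_eq[OF strict_mono_viewcount[OF assms(1,2)]] by simp
  qed
qed

definition kinked_linear :: "real \<Rightarrow> real \<Rightarrow> real \<Rightarrow> real \<Rightarrow> real" where
  "kinked_linear a s1 s2 b = min b a * s1 + max 0 (b - a) * s2"

lemma utility_eq_kinked_linear:
  assumes "lpsG > 0" "lpsB > 0" "lpu \<ge> 0" "alpha \<ge> 0" "b \<ge> 0"
  shows "utility piG lpsG lpsB lpu tau alpha b = tau * (2 * piG - 1)
    + kinked_linear alpha ((1 - piG) / lpsB - piG / lpsG)
        ((1 - piG) / (lpsB + lpu) - piG / (lpsG + lpu)) b"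
  unfolding utility_def kinked_linear_def t_beta_eq[OF assms(1,3-5)] t_beta_eq[OF assms(2-5)]
  by (simp add: algebra_simps)

lemma kinked_linear_le_at_0:
  assumes "0 \<le> a" "0 \<le> b" "s1 \<le> 0" "s2 \<le> 0"
  shows "kinked_linear a s1 s2 b \<le> kinked_linear a s1 s2 0"
proof -
  have "min b a * s1 \<le> 0" "max 0 (b - a) * s2 \<le> 0"
    using assms by (simp_all add: mult_nonneg_nonpos)
  then show ?thesis using \<open>0 \<le> a\<close> by (simp add: kinked_linear_def)
qed

lemma kinked_linear_le_at_kink:
  assumes "s1 \<ge> 0" "s2 \<le> 0"
  shows "kinked_linear a s1 s2 b \<le> kinked_linear a s1 s2 a"
proof -
  have "min b a * s1 \<le> a * s1" "max 0 (b - a) * s2 \<le> 0"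
    using assms by (simp_all add: mult_right_mono mult_nonneg_nonpos)
  then show ?thesis by (simp add: kinked_linear_def)
qed

lemma kinked_linear_le_at_right_end:
  assumes "a \<le> B" "b \<le> B" "s1 \<ge> 0" "s2 \<ge> 0"
  shows "kinked_linear a s1 s2 b \<le> kinked_linear a s1 s2 B"
proof -
  have "min b a * s1 \<le> a * s1" "max 0 (b - a) * s2 \<le> max 0 (B - a) * s2"
    using assms by (auto intro: mult_right_mono)
  with assms show ?thesis by (simp add: kinked_linear_def)
qed

text \<open>With \<open>p = pi_G\<close>, \<open>q = pi_B\<close>, \<open>g \<ge> b\<close> the push rates and \<open>l\<close> the pull rate: a negative slope
  before the kink forces a nonpositive slope after it.\<close>
lemma ratio_le_add_same:
  fixes p q g b l :: real
  assumes "q \<ge> 0" "0 < b" "b \<le> g" "l \<ge> 0" "q / b \<le> p / g"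
  shows "q / (b + l) \<le> p / (g + l)"
proof -
  have "q * g \<le> p * b" using assms by (simp add: field_simps)
  moreover have "q * b \<le> q * g" using assms by (simp add: mult_left_mono)
  ultimately have "q \<le> p" using \<open>0 < b\<close> by (metis order.trans mult_le_cancel_right_pos)
  then have "q * l \<le> p * l" using assms by (simp add: mult_right_mono)
  with \<open>q * g \<le> p * b\<close> have "q * (g + l) \<le> p * (b + l)" by (simp add: algebra_simps)
  with assms show ?thesis by (simp add: field_simps)
qed

theorem lemma1:
  fixes piG lpsG lpsB lpu tau alpha :: real
  assumes "tau > 0" and "0 \<le> piG" and "piG \<le> 1"
    and "lpsB > 0" and "lpsG \<ge> lpsB" and "lpu > 0"
    and "0 \<le> alpha" and "alpha \<le> beta_tauB lpsB lpu alpha tau"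
  shows "(piG / lpsG \<ge> (1 - piG) / lpsB \<longrightarrow>
            best_response piG lpsG lpsB lpu tau alpha 0)
       \<and> (piG / lpsG \<le> (1 - piG) / lpsB \<and>
          piG / (lpsG + lpu) \<ge> (1 - piG) / (lpsB + lpu) \<longrightarrow>
            best_response piG lpsG lpsB lpu tau alpha alpha)
       \<and> (piG / lpsG \<le> (1 - piG) / lpsB \<and>
          piG / (lpsG + lpu) < (1 - piG) / (lpsB + lpu) \<longrightarrow>
            best_response piG lpsG lpsB lpu tau alpha (beta_tauB lpsB lpu alpha tau))"
proof -
  define B where "B = beta_tauB lpsB lpu alpha tau"
  define f where "f = kinked_linear alpha ((1 - piG) / lpsB - piG / lpsG)
    ((1 - piG) / (lpsB + lpu) - piG / (lpsG + lpu))"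
  have best_response_if: "best_response piG lpsG lpsB lpu tau alpha beta"
    if "0 \<le> beta" "beta \<le> B" "\<And>b. 0 \<le> b \<Longrightarrow> b \<le> B \<Longrightarrow> f b \<le> f beta" for beta
    using that utility_eq_kinked_linear[of lpsG lpsB lpu alpha] assms
    unfolding best_response_def B_def[symmetric] f_def by auto
  have "alpha \<le> B" using assms(8) by (simp add: B_def)
  note kinked = kinked_linear_le_at_0[OF assms(7)] kinked_linear_le_at_kink
    kinked_linear_le_at_right_end[OF \<open>alpha \<le> B\<close>]
  show ?thesis
    unfolding B_def[symmetric]
  proof (intro conjI impI)
    assume "(1 - piG) / lpsB \<le> piG / lpsG"
    moreover from this have "(1 - piG) / (lpsB + lpu) \<le> piG / (lpsG + lpu)"
      using ratio_le_add_same[OF _ assms(4,5)] assms(3,6) by simp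
    ultimately show "best_response piG lpsG lpsB lpu tau alpha 0"
      using assms(7) \<open>alpha \<le> B\<close> by (intro best_response_if) (simp_all add: f_def kinked)
  next
    assume "piG / lpsG \<le> (1 - piG) / lpsB \<and> (1 - piG) / (lpsB + lpu) \<le> piG / (lpsG + lpu)"
    then show "best_response piG lpsG lpsB lpu tau alpha alpha"
      using assms(7) \<open>alpha \<le> B\<close> by (intro best_response_if) (simp_all add: f_def kinked)
  next
    assume "piG / lpsG \<le> (1 - piG) / lpsB \<and> piG / (lpsG + lpu) < (1 - piG) / (lpsB + lpu)"
    then show "best_response piG lpsG lpsB lpu tau alpha B"
      using assms(7) \<open>alpha \<le> B\<close> by (intro best_response_if) (simp_all add: f_def kinked)
  qed
qed

end
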